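(* Let $a\in(0,1]$, $b>0$, and let $q\in(0,1]$ with $q+a>1$. Let $I_n$ be the first decrement of the block-counting process of the $\mathrm{Beta}(a,b)$-coalescent started at $n$, and let $\xi$ be a random variable with $\mathbb{P}\{\xi=k\}=p^{(a)}_k:=\frac{(2-a)\Gamma(k+a-1)}{\Gamma(a)(k+1)!}$, $k\in\mathbb{N}$. Then $$\sum_{k=1}^{n-1}k^q\big|\mathbb{P}\{I_n=k\}-\mathbb{P}\{\xi=k\}\big|=O(n^{a+q-2}),\qquad n\to\infty.$$
   Context: For the $\mathrm{Beta}(a,b)$-coalescent, $\Lambda$ has density $x^{a-1}(1-x)^{b-1}/\mathrm{B}(a,b)$ on $[0,1]$; set $\lambda_{n,k}=\int_0^1x^{k-2}(1-x)^{n-k}\Lambda(dx)$ for $2\le k\le n$ and $\lambda_n=\sum_{k=2}^n\binom nk\lambda_{n,k}$. The first decrement $I_n$ has law $\mathbb{P}\{I_n=k\}=\binom{n}{k+1}\lambda_{n,k+1}/\lambda_n$, $1\le k\le n-1$. *)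

theory Defs
  imports "HOL-Analysis.Analysis" "HOL-Library.Landau_Symbols"
begin

definition beta_density :: "real \<Rightarrow> real \<Rightarrow> real \<Rightarrow> real" where
  "beta_density a b x = x powr (a - 1) * (1 - x) powr (b - 1) / Beta a b"

definition lambda_nk :: "real \<Rightarrow> real \<Rightarrow> nat \<Rightarrow> nat \<Rightarrow> real" where
  "lambda_nk a b n k = (LBINT x=0..1. x ^ (k - 2) * (1 - x) ^ (n - k) * beta_density a b x)"

definition lambda_n :: "real \<Rightarrow> real \<Rightarrow> nat \<Rightarrow> real" where
  "lambda_n a b n = (\<Sum>k=2..n. real (n choose k) * lambda_nk a b n k)"

definition first_decrement_prob :: "real \<Rightarrow> real \<Rightarrow> nat \<Rightarrow> nat \<Rightarrow> real" where
  "first_decrement_prob a b n k = real (n choose (k + 1)) * lambda_nk a b n (k + 1) / lambda_n a b n"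

definition p_xi :: "real \<Rightarrow> nat \<Rightarrow> real" where
  "p_xi a k = (2 - a) * Gamma (real k + a - 1) / (Gamma a * fact (k + 1))"

end

theory Submission
  imports Defs
begin

text \<open>
  Computing lambda_{n,k+1} as a Beta integral shows that
  P{I_n = k} = p_k w(n-1-k) / (sum_{j=1}^{n-1} p_j w(n-1-j)), where p_k = p^(a)_k and
  w(m) = Gamma(m+b)/m!: the law of I_n is that of xi restricted to {1..n-1} and reweighted
  by w(n-1-k). As w(m) is comparable to (m+1)^(b-1) and ln w has increments O(1/m), the
  relative deviation of w(n-1-k) from w(n-2) is O(k/n) for k <= n/2 and
  O(1 + ((n-k)/n)^(b-1)) beyond. Since p_k = O(k^(a-3)) and P{xi >= n} = O(n^(a-2)), the
  reweighting error summed against k^q p_k is O(n^(a+q-2)), and so is the error caused by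
  the normalising sum.
\<close>

section \<open>Asymptotics of the Gamma function\<close>

lemma LIMSEQ_pos_bounded_away:
  fixes X :: "nat \<Rightarrow> real"
  assumes lim: "X \<longlonglongrightarrow> l" and l: "l > 0" and pos: "\<And>n. X n > 0"
  obtains c K where "c > 0" "K > 0" "\<And>n. c \<le> X n" "\<And>n. X n \<le> K"
proof -
  obtain K where K: "K > 0" "\<And>n. norm (X n) \<le> K"
    using convergent_imp_Bseq[OF convergentI[OF lim]] by (auto elim: BseqE)
  have "(\<lambda>n. inverse (X n)) \<longlonglongrightarrow> inverse l"
    using lim l by (intro tendsto_inverse) auto
  then obtain K' where K': "K' > 0" "\<And>n. norm (inverse (X n)) \<le> K'"
    by (metis BseqE convergent_imp_Bseq convergentI)
  show ?thesis
  proof (rule that[of "inverse K'" K])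
    fix n
    have "inverse (X n) \<le> K'" using K'(2)[of n] pos[of n] by simp
    then show "inverse K' \<le> X n"
      using le_imp_inverse_le[of "inverse (X n)" K'] pos[of n] by simp
    show "X n \<le> K" using K(2)[of n] by simp
  qed (use K K' in auto)
qed

lemma Gamma_real_plus1: "x > 0 \<Longrightarrow> Gamma (x + 1) = x * Gamma (x :: real)"
  by (intro Gamma_plus1) (auto elim!: nonpos_Ints_cases)

lemma fact_powr_div_Gamma_LIMSEQ:
  fixes z :: real assumes z: "z > 0"
  shows "(\<lambda>n. fact (n-1) * real n powr z / Gamma (real n + z)) \<longlonglongrightarrow> 1"
proof -
  have zn: "z \<notin> \<int>\<^sub>\<le>\<^sub>0" using z by (auto elim!: nonpos_Ints_cases)
  have gz: "Gamma z > 0" using z by simp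
  have "(\<lambda>n. Gamma_series' z n / Gamma z) \<longlonglongrightarrow> 1"
    using tendsto_divide[OF Gamma_series'_LIMSEQ tendsto_const, of "Gamma z" z] gz by simp
  then show ?thesis
  proof (rule Lim_transform_eventually)
    show "\<forall>\<^sub>F n in sequentially.
            Gamma_series' z n / Gamma z = fact (n-1) * real n powr z / Gamma (real n + z)"
      using eventually_gt_at_top[of "0::nat"]
    proof eventually_elim
      case (elim n)
      have "pochhammer z n = Gamma (z + real n) / Gamma z" using pochhammer_Gamma[OF zn] by simp
      moreover have "Gamma (z + real n) > 0" using z by (intro Gamma_real_pos) simp
      ultimately show ?case using elim gz
        by (simp add: Gamma_series'_def powr_def add.commute field_simps)
    qed
  qed
qed

lemma Gamma_nat_add_bounds:
  fixes z :: real assumes z: "z > 0"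
  obtains c K where "c > 0" "K > 0"
    "\<And>n. n \<ge> 1 \<Longrightarrow> c * fact (n-1) * real n powr z \<le> Gamma (real n + z)"
    "\<And>n. n \<ge> 1 \<Longrightarrow> Gamma (real n + z) \<le> K * fact (n-1) * real n powr z"
proof -
  define X where "X = (\<lambda>n. Gamma (real (Suc n) + z) / (fact n * real (Suc n) powr z))"
  have "X \<longlonglongrightarrow> inverse 1"
    using tendsto_inverse[OF LIMSEQ_Suc[OF fact_powr_div_Gamma_LIMSEQ[OF z]]]
    by (simp add: X_def)
  moreover have "X n > 0" for n using z by (simp add: X_def)
  ultimately obtain c K where cK: "c > 0" "K > 0" "\<And>n. c \<le> X n" "\<And>n. X n \<le> K"
    using LIMSEQ_pos_bounded_away[of X "inverse 1"] by auto
  show ?thesis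
  proof (rule that[OF cK(1,2)])
    fix n :: nat assume "n \<ge> 1"
    then obtain m where n: "n = Suc m" by (cases n) auto
    have pos: "fact m * real (Suc m) powr z > 0" by simp
    show "c * fact (n-1) * real n powr z \<le> Gamma (real n + z)"
      using cK(3)[of m] pos by (simp add: X_def n le_divide_eq mult.assoc)
    show "Gamma (real n + z) \<le> K * fact (n-1) * real n powr z"
      using cK(4)[of m] pos by (simp add: X_def n divide_le_eq mult.assoc)
  qed
qed

lemma Gamma_nat_add_minus_one_le:
  fixes a :: real assumes a: "0 < a" "a \<le> 1"
  obtains K where "K > 0"
    "\<And>n. n \<ge> 1 \<Longrightarrow> Gamma (real n + a - 1) \<le> K * fact (n-1) * real n powr (a-1)"
proof -
  obtain K where K: "K > 0"
    "\<And>n. n \<ge> 1 \<Longrightarrow> Gamma (real n + a) \<le> K * fact (n-1) * real n powr a"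
    using Gamma_nat_add_bounds[OF a(1)] by metis
  show ?thesis
  proof (rule that[of "K / a"])
    fix n :: nat assume n: "n \<ge> 1"
    have pos: "real n + a - 1 > 0" using a n by linarith
    have "a * real n \<le> real n + a - 1"
      using mult_right_mono[of a 1 "real n - 1"] a n by (simp add: algebra_simps)
    then have "Gamma (real n + a - 1) \<le> Gamma (real n + a - 1) * (real n + a - 1) / (a * real n)"
      using a n pos by (simp add: le_divide_eq mult_left_mono)
    also have "\<dots> = Gamma (real n + a) / (a * real n)"
      using Gamma_real_plus1[OF pos] by (simp add: mult.commute)
    also have "\<dots> \<le> K * fact (n-1) * real n powr a / (a * real n)"
      using K(2)[OF n] a n by (simp add: divide_right_mono)
    also have "\<dots> = K / a * fact (n-1) * real n powr (a-1)"
      using n by (simp add: powr_diff)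
    finally show "Gamma (real n + a - 1) \<le> K / a * fact (n-1) * real n powr (a-1)" .
  qed (use K a in auto)
qed

lemma powr_minus_one_le_powr_diff:
  fixes t :: real
  assumes t: "0 < t" "t \<le> 1" and k: "k \<ge> 1"
  shows "real k powr (t - 1) \<le> (real k powr t - real (k-1) powr t) / t"
proof (cases "k = 1")
  case True
  then show ?thesis using t by simp
next
  case False
  then have k2: "k \<ge> 2" using k by simp
  have kpos: "real k > 0" using k by simp
  have "((real k - 1) / real k) powr t * 1 powr (1 - t) \<le> t * ((real k - 1) / real k) + (1 - t) * 1"
    using k2 t by (intro Youngs_inequality_0) auto
  then have "(real k - 1) powr t / real k powr t \<le> 1 - t / real k"
    using k2 kpos by (simp add: powr_divide field_simps)
  then have "(real k - 1) powr t \<le> real k powr t - t * (real k powr t / real k)"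
    using kpos by (simp add: field_simps)
  also have "real k powr t / real k = real k powr (t - 1)"
    using kpos by (simp add: powr_diff)
  finally show ?thesis using k t by (simp add: of_nat_diff field_simps)
qed

lemma sum_powr_le:
  fixes s :: real assumes s: "s > -1"
  obtains C where "C > 0" "\<And>N. (\<Sum>k=1..N. real k powr s) \<le> C * real N powr (s + 1)"
proof (cases "s \<le> 0")
  case True
  have "(\<Sum>k=1..N. real k powr s) \<le> real N powr (s + 1) / (s + 1)" for N
  proof (induction N)
    case (Suc N)
    have "(\<Sum>k=1..Suc N. real k powr s) = (\<Sum>k=1..N. real k powr s) + real (Suc N) powr s"
      by simp
    also have "\<dots> \<le> real N powr (s + 1) / (s + 1)
        + (real (Suc N) powr (s + 1) - real (Suc N - 1) powr (s + 1)) / (s + 1)"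
      using Suc powr_minus_one_le_powr_diff[of "s + 1" "Suc N"] s True by simp
    also have "\<dots> = real (Suc N) powr (s + 1) / (s + 1)" by (simp add: diff_divide_distrib)
    finally show ?case .
  qed simp
  then show ?thesis using that[of "1 / (s + 1)"] s by simp
next
  case False
  have "(\<Sum>k=1..N. real k powr s) \<le> real N powr (s + 1)" for N
  proof -
    have "(\<Sum>k=1..N. real k powr s) \<le> (\<Sum>k=1..N. real N powr s)"
      using False by (intro sum_mono powr_mono2) auto
    also have "\<dots> = real N powr (s + 1)"
      by (cases "N = 0") (simp_all add: powr_add)
    finally show ?thesis .
  qed
  then show ?thesis using that[of 1] by simp
qed

lemma half_powr_mult:
  fixes x e :: real assumes "x > 0"
  shows "(x / 2) powr e * x = 2 powr (- e) * x powr (e + 1)"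
proof -
  have "(x / 2) powr e = x powr e / 2 powr e" by (rule powr_divide)
  moreover have "x powr (e + 1) = x powr e * x" using assms by (simp add: powr_add)
  moreover have "2 powr (- e) = inverse (2 powr e)" by (rule powr_minus)
  ultimately show ?thesis by (simp only:) (simp add: field_simps)
qed

lemma sum_ratio_powr_le:
  fixes c :: real assumes c: "c > -1"
  obtains C where "C > 0" "\<And>n. (\<Sum>k=1..n-1. (real (n-k) / real (n-1)) powr c) \<le> C * real n"
proof -
  obtain C where C: "C > 0" "\<And>N. (\<Sum>k=1..N. real k powr c) \<le> C * real N powr (c + 1)"
    using sum_powr_le[OF c] by metis
  show ?thesis
  proof (rule that[OF C(1)])
    fix n :: nat
    have "(\<Sum>k=1..n-1. real k powr c) = (\<Sum>k=1..n-1. real (n-k) powr c)"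
      by (subst sum.atLeastAtMost_rev) (auto intro!: sum.cong)
    then have "(\<Sum>k=1..n-1. (real (n-k) / real (n-1)) powr c)
        = (\<Sum>k=1..n-1. real k powr c) / real (n-1) powr c"
      by (simp add: powr_divide sum_divide_distrib)
    also have "\<dots> \<le> C * real (n-1) powr (c + 1) / real (n-1) powr c"
      using C(2) by (intro divide_right_mono) auto
    also have "\<dots> \<le> C * real n"
      using C(1) by (cases "n \<le> 1") (auto simp: powr_add)
    finally show "(\<Sum>k=1..n-1. (real (n-k) / real (n-1)) powr c) \<le> C * real n" .
  qed
qed

section \<open>Reweighting a probability vector\<close>

lemma abs_minus_weighted_sum_le:
  fixes p \<rho> :: "nat \<Rightarrow> real" and R :: real
  assumes R: "R > 0" and p: "\<And>k. k \<in> A \<Longrightarrow> p k \<ge> 0"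
  shows "\<bar>R - (\<Sum>k\<in>A. p k * \<rho> k)\<bar>
           \<le> R * (\<bar>1 - sum p A\<bar> + (\<Sum>k\<in>A. p k * (\<bar>\<rho> k - R\<bar> / R)))"
proof -
  have "R - (\<Sum>k\<in>A. p k * \<rho> k) = R * (1 - sum p A) + (\<Sum>k\<in>A. p k * (R - \<rho> k))"
    by (simp add: algebra_simps sum_distrib_left sum_subtractf)
  then have "\<bar>R - (\<Sum>k\<in>A. p k * \<rho> k)\<bar> \<le> \<bar>R * (1 - sum p A)\<bar> + \<bar>\<Sum>k\<in>A. p k * (R - \<rho> k)\<bar>"
    by (simp only: abs_triangle_ineq)
  also have "\<dots> \<le> R * \<bar>1 - sum p A\<bar> + (\<Sum>k\<in>A. \<bar>p k * (R - \<rho> k)\<bar>)"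
    using R sum_abs[of "\<lambda>k. p k * (R - \<rho> k)" A] by (simp add: abs_mult)
  also have "(\<Sum>k\<in>A. \<bar>p k * (R - \<rho> k)\<bar>) = R * (\<Sum>k\<in>A. p k * (\<bar>\<rho> k - R\<bar> / R))"
    using p R by (simp add: abs_mult abs_minus_commute sum_distrib_left)
  finally show ?thesis by (simp add: distrib_left)
qed

lemma sum_abs_normalized_minus_le:
  fixes p \<rho> w :: "nat \<Rightarrow> real" and N :: nat
  assumes N: "N \<ge> 1" and p: "\<And>k. k \<in> {1..N} \<Longrightarrow> p k \<ge> 0" "p 1 > 0"
    and \<rho>: "\<And>k. \<rho> k > 0" and w: "\<And>k. w k \<ge> 0"
  defines "S \<equiv> \<Sum>j=1..N. p j * \<rho> j"
    and "D \<equiv> \<lambda>k. \<bar>\<rho> k - \<rho> 1\<bar> / \<rho> 1"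
    and "E \<equiv> \<bar>1 - (\<Sum>k=1..N. p k)\<bar> + (\<Sum>k=1..N. p k * (\<bar>\<rho> k - \<rho> 1\<bar> / \<rho> 1))"
  shows "(\<Sum>k=1..N. w k * \<bar>p k * \<rho> k / S - p k\<bar>)
           \<le> ((\<Sum>k=1..N. w k * p k * D k) + E * (\<Sum>k=1..N. w k * p k)) / p 1"
proof -
  define R where "R = \<rho> 1"
  have R: "R > 0" using \<rho> by (simp add: R_def)
  have SR: "p 1 * R \<le> S"
    unfolding S_def R_def using N p \<rho> by (intro member_le_sum) (auto intro: mult_nonneg_nonneg less_imp_le)
  moreover have "p 1 * R > 0" using p(2) R by simp
  ultimately have S: "S > 0" by linarith
  have RS: "\<bar>R - S\<bar> \<le> R * E"
    unfolding S_def E_def R_def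
    using abs_minus_weighted_sum_le[where A="{1..N}" and \<rho>=\<rho>, OF \<rho>[of 1] p(1)] by simp
  have D0: "D k \<ge> 0" for k using \<rho>[of 1] by (simp add: D_def)
  have E0: "E \<ge> 0" unfolding E_def using p \<rho>[of 1] by (intro add_nonneg_nonneg sum_nonneg) auto
  have "w k * \<bar>p k * \<rho> k / S - p k\<bar> \<le> (w k * p k * D k + w k * p k * E) / p 1"
    if k: "k \<in> {1..N}" for k
  proof -
    have "\<bar>\<rho> k - S\<bar> \<le> R * (D k + E)"
      using abs_triangle_ineq[of "\<rho> k - R" "R - S"] RS R by (simp add: D_def R_def algebra_simps)
    then have "p k * \<bar>\<rho> k - S\<bar> / S \<le> p k * (R * (D k + E)) / (p 1 * R)"
      using p k SR S R D0[of k] E0 by (intro frac_le mult_left_mono mult_nonneg_nonneg) auto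
    moreover have "p k * \<rho> k / S - p k = p k * (\<rho> k - S) / S"
      using S by (simp add: field_simps)
    then have "\<bar>p k * \<rho> k / S - p k\<bar> = p k * \<bar>\<rho> k - S\<bar> / S"
      using S p(1)[OF k] by (simp add: abs_mult)
    ultimately have "\<bar>p k * \<rho> k / S - p k\<bar> \<le> p k * (D k + E) / p 1"
      using R by simp
    then have "w k * \<bar>p k * \<rho> k / S - p k\<bar> \<le> w k * (p k * (D k + E) / p 1)"
      using w by (rule mult_left_mono)
    also have "\<dots> = (w k * p k * D k + w k * p k * E) / p 1"
      by (simp add: algebra_simps add_divide_distrib)
    finally show ?thesis .
  qed
  then have "(\<Sum>k=1..N. w k * \<bar>p k * \<rho> k / S - p k\<bar>)
      \<le> (\<Sum>k=1..N. (w k * p k * D k + w k * p k * E) / p 1)"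
    by (intro sum_mono) auto
  also have "\<dots> = ((\<Sum>k=1..N. w k * p k * D k) + E * (\<Sum>k=1..N. w k * p k)) / p 1"
    unfolding sum_divide_distrib[symmetric] sum.distrib sum_distrib_left by (simp add: mult_ac)
  finally show ?thesis .
qed

lemma p_xi_pos:
  assumes "0 < a" "a < 2" "k \<ge> 1"
  shows "p_xi a k > 0"
  using assms by (simp add: p_xi_def)

lemma p_xi_le_powr:
  fixes a :: real assumes a: "0 < a" "a \<le> 1"
  obtains C where "C > 0" "\<And>k. k \<ge> 1 \<Longrightarrow> p_xi a k \<le> C * real k powr (a - 3)"
proof -
  obtain K where K: "K > 0"
    "\<And>n. n \<ge> 1 \<Longrightarrow> Gamma (real n + a - 1) \<le> K * fact (n-1) * real n powr (a-1)"
    using Gamma_nat_add_minus_one_le[OF a] by metis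
  show ?thesis
  proof (rule that[of "(2 - a) * K / Gamma a"])
    fix k :: nat assume k: "k \<ge> 1"
    have kpos: "real k > 0" using k by simp
    have fact_eq: "fact (k+1) = real (k+1) * (real k * fact (k-1))"
      using fact_reduce[of "k+1"] fact_reduce[of k] k by simp
    have fact_ge: "real k * real k * fact (k-1) \<le> (fact (k+1) :: real)"
      unfolding fact_eq mult.assoc[symmetric] by (intro mult_right_mono) auto
    have "p_xi a k = (2 - a) / Gamma a * (Gamma (real k + a - 1) / fact (k+1))"
      by (simp add: p_xi_def)
    also have "\<dots> \<le> (2 - a) / Gamma a
        * (K * fact (k-1) * real k powr (a-1) / (real k * real k * fact (k-1)))"
      using K fact_ge kpos a by (intro mult_left_mono frac_le) auto
    also have "\<dots> = (2 - a) * K / Gamma a * real k powr (a - 3)"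
      using kpos by (simp add: powr_diff powr_numeral power3_eq_cube field_simps)
    finally show "p_xi a k \<le> (2 - a) * K / Gamma a * real k powr (a - 3)" .
  qed (use K a in simp)
qed

lemma sum_p_xi_eq:
  fixes a :: real assumes a: "a > 0" and n: "n \<ge> 1"
  shows "(\<Sum>k=1..n-1. p_xi a k) = 1 - Gamma (real n + a - 1) / (Gamma a * fact n)"
  using n
proof (induction n rule: dec_induct)
  case base
  show ?case using Gamma_real_pos[OF a] by simp
next
  case (step m)
  have pos: "real m + a - 1 > 0" using step(1) a by linarith
  have "{1..Suc m - 1} = insert m {1..m-1}" using step(1) by auto
  then have "(\<Sum>k=1..Suc m - 1. p_xi a k) = p_xi a m + (\<Sum>k=1..m-1. p_xi a k)"
    using step(1) by (simp add: sum.insert)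
  also have "\<dots> = p_xi a m + 1 - Gamma (real m + a - 1) / (Gamma a * fact m)"
    using step(3) by simp
  also have "\<dots> = 1 - Gamma (real m + a) / (Gamma a * fact (Suc m))"
  proof -
    define G where "G = Gamma (real m + a - 1)"
    define D where "D = Gamma a * ((real m + 1) * fact m)"
    have "D > 0" using a by (simp add: D_def)
    then have e1: "G / (Gamma a * fact m) = (real m + 1) * G / D"
      by (simp add: D_def)
    have e2: "p_xi a m = (2 - a) * G / D"
      by (simp add: p_xi_def G_def D_def fact_Suc)
    have e3: "Gamma (real m + a) / (Gamma a * fact (Suc m)) = (real m + a - 1) * G / D"
      using Gamma_real_plus1[OF pos] by (simp add: G_def D_def fact_Suc)
    have "p_xi a m + 1 - G / (Gamma a * fact m) = 1 - ((real m + 1) * G - (2 - a) * G) / D"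
      unfolding e1 e2 by (simp add: diff_divide_distrib)
    also have "(real m + 1) * G - (2 - a) * G = (real m + a - 1) * G"
      by (simp add: algebra_simps)
    finally show ?thesis unfolding e3 G_def .
  qed
  finally show ?case by (simp add: add_ac)
qed

lemma p_xi_tail_le:
  fixes a :: real assumes a: "0 < a" "a \<le> 1"
  obtains C where "C > 0"
    "\<And>n. n \<ge> 1 \<Longrightarrow> \<bar>1 - (\<Sum>k=1..n-1. p_xi a k)\<bar> \<le> C * real n powr (a - 2)"
proof -
  obtain K where K: "K > 0"
    "\<And>n. n \<ge> 1 \<Longrightarrow> Gamma (real n + a - 1) \<le> K * fact (n-1) * real n powr (a-1)"
    using Gamma_nat_add_minus_one_le[OF a] by metis
  show ?thesis
  proof (rule that[of "K / Gamma a"])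
    fix n :: nat assume n: "n \<ge> 1"
    have npos: "real n > 0" using n by simp
    have fact_n: "fact n = real n * fact (n-1)" using fact_reduce[of n] n by simp
    have "\<bar>1 - (\<Sum>k=1..n-1. p_xi a k)\<bar> = Gamma (real n + a - 1) / (Gamma a * fact n)"
      using sum_p_xi_eq[OF a(1) n] a n by simp
    also have "\<dots> \<le> K * fact (n-1) * real n powr (a-1) / (Gamma a * (real n * fact (n-1)))"
      unfolding fact_n using K(2)[OF n] a n by (intro divide_right_mono) simp_all
    also have "\<dots> = K / Gamma a * real n powr (a - 2)"
      using npos by (simp add: powr_diff power2_eq_square field_simps)
    finally show "\<bar>1 - (\<Sum>k=1..n-1. p_xi a k)\<bar> \<le> K / Gamma a * real n powr (a - 2)" .
  qed (use K a in simp)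
qed

lemma sum_powr_mult_p_xi_le:
  fixes a s t :: real
  assumes a: "0 < a" "a \<le> 1" and s: "s > 0" "a + t - 2 \<le> s"
  obtains C where "C > 0"
    "\<And>n. (\<Sum>k=1..n-1. real k powr t * p_xi a k) \<le> C * real n powr s"
proof -
  obtain Cp where Cp: "Cp > 0" "\<And>k. k \<ge> 1 \<Longrightarrow> p_xi a k \<le> Cp * real k powr (a - 3)"
    using p_xi_le_powr[OF a] by metis
  obtain Cs where Cs: "Cs > 0" "\<And>N. (\<Sum>k=1..N. real k powr (s - 1)) \<le> Cs * real N powr s"
    using sum_powr_le[of "s - 1"] s(1) by auto
  show ?thesis
  proof (rule that[of "Cp * Cs"])
    fix n :: nat
    have "(\<Sum>k=1..n-1. real k powr t * p_xi a k) \<le> (\<Sum>k=1..n. Cp * real k powr (s - 1))"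
    proof (rule sum_mono2[THEN order.trans[rotated]])
      show "(\<Sum>k=1..n-1. real k powr t * p_xi a k) \<le> (\<Sum>k=1..n-1. Cp * real k powr (s - 1))"
      proof (rule sum_mono)
        fix k assume "k \<in> {1..n-1}"
        then have k: "k \<ge> 1" by simp
        have "real k powr t * p_xi a k \<le> real k powr t * (Cp * real k powr (a - 3))"
          using Cp(2)[OF k] by (intro mult_left_mono) auto
        also have "\<dots> = Cp * real k powr (a + t - 3)"
          by (simp add: powr_add[symmetric] algebra_simps)
        also have "\<dots> \<le> Cp * real k powr (s - 1)"
          using k s Cp by (intro mult_left_mono powr_mono) auto
        finally show "real k powr t * p_xi a k \<le> Cp * real k powr (s - 1)" .
      qed
    qed (use Cp in auto)
    also have "\<dots> \<le> Cp * Cs * real n powr s"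
      using Cs(2)[of n] Cp by (simp add: sum_distrib_left[symmetric] mult.assoc)
    finally show "(\<Sum>k=1..n-1. real k powr t * p_xi a k) \<le> Cp * Cs * real n powr s" .
  qed (use Cp Cs in simp)
qed

section \<open>The first decrement as a reweighted limit law\<close>

definition gamma_over_fact :: "real \<Rightarrow> nat \<Rightarrow> real" where
  "gamma_over_fact b m = Gamma (real m + b) / fact m"

lemma gamma_over_fact_pos: "b > 0 \<Longrightarrow> gamma_over_fact b m > 0"
  by (simp add: gamma_over_fact_def)

lemma power_mult_powr:
  fixes x c :: real assumes "x \<ge> 0"
  shows "x ^ m * x powr c = x powr (real m + c)"
proof (cases "x = 0")
  case False
  then show ?thesis using assms by (simp add: powr_add powr_realpow)
qed simp

lemma lambda_nk_eq_Beta: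
  fixes a b :: real assumes a: "a > 0" and b: "b > 0" and j: "2 \<le> j" "j \<le> n"
  shows "lambda_nk a b n j = Beta (real (j-2) + a) (real (n-j) + b) / Beta a b"
proof -
  define \<alpha> where "\<alpha> = real (j-2) + a"
  define \<beta> where "\<beta> = real (n-j) + b"
  have \<alpha>: "\<alpha> > 0" and \<beta>: "\<beta> > 0" using a b by (auto simp: \<alpha>_def \<beta>_def)
  define g where "g = (\<lambda>x::real. x powr (\<alpha> - 1) * (1 - x) powr (\<beta> - 1) / Beta a b)"
  have integrand: "x ^ (j-2) * (1 - x) ^ (n-j) * beta_density a b x = g x" if "x \<in> {0..1}" for x
  proof -
    have "x ^ (j-2) * x powr (a - 1) = x powr (\<alpha> - 1)"
      using that power_mult_powr[of x "j-2" "a-1"] by (simp add: \<alpha>_def algebra_simps)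
    moreover have "(1 - x) ^ (n-j) * (1 - x) powr (b - 1) = (1 - x) powr (\<beta> - 1)"
      using that power_mult_powr[of "1-x" "n-j" "b-1"] by (simp add: \<beta>_def algebra_simps)
    ultimately show ?thesis
      unfolding g_def beta_density_def by (metis mult.assoc mult.left_commute times_divide_eq_right)
  qed
  have integrable: "set_integrable lborel {0..1} g"
    unfolding g_def using integrable_Beta[OF \<alpha> \<beta>]
    by (simp add: divide_inverse set_integrable_mult_left)
  have "lambda_nk a b n j = (LBINT x:{0..1}. x ^ (j-2) * (1 - x) ^ (n-j) * beta_density a b x)"
    unfolding lambda_nk_def
    using interval_integral_Icc[of 0 1 "\<lambda>x. x ^ (j-2) * (1 - x) ^ (n-j) * beta_density a b x"]
    by (simp add: zero_ereal_def one_ereal_def)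
  also have "\<dots> = (LBINT x:{0..1}. g x)"
    by (rule set_lebesgue_integral_cong) (use integrand in auto)
  also have "\<dots> = integral {0..1} g"
    by (rule set_borel_integral_eq_integral(2)[OF integrable])
  also have "\<dots> = Beta \<alpha> \<beta> / Beta a b"
    unfolding g_def by (intro integral_unique has_integral_divide has_integral_Beta_real \<alpha> \<beta>)
  finally show ?thesis by (simp add: \<alpha>_def \<beta>_def)
qed

lemma choose_mult_lambda_nk_eq:
  fixes a b :: real assumes a: "0 < a" "a < 2" and b: "b > 0" and k: "1 \<le> k" "k < n"
  shows "real (n choose (k+1)) * lambda_nk a b n (k+1)
     = fact n * Gamma a / ((2 - a) * Gamma (real n + a + b - 2) * Beta a b)
       * (p_xi a k * gamma_over_fact b (n-1-k))"
proof -
  have lambda: "lambda_nk a b n (k+1) = Beta (real k + a - 1) (real (n-1-k) + b) / Beta a b"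
    using lambda_nk_eq_Beta[of a b "k+1" n] a b k by (simp add: of_nat_diff algebra_simps)
  have Beta: "Beta (real k + a - 1) (real (n-1-k) + b)
      = Gamma (real k + a - 1) * Gamma (real (n-1-k) + b) / Gamma (real n + a + b - 2)"
  proof -
    have "real k + a - 1 + (real (n-1-k) + b) = real n + a + b - 2" using k by (simp add: of_nat_diff)
    then show ?thesis by (simp only: Beta_def)
  qed
  have choose: "real (n choose (k+1)) = fact n / (fact (k+1) * fact (n-1-k))"
    using binomial_fact[of "k+1" n] k by simp
  txt \<open>Opaque names for \<open>2 - a\<close> and \<open>(k+1)!\<close> stop \<open>field_simps\<close> from expanding them
    into sums that it cannot recognise as nonzero.\<close>
  define c where "c = 2 - a"
  define f where "f = (fact (k+1) :: real)"
  have "Gamma a \<noteq> 0" "c \<noteq> 0" "f \<noteq> 0"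
    using a by (metis Gamma_real_pos less_irrefl, simp_all add: c_def f_def)
  moreover have "Beta a b > 0" "Gamma (real n + a + b - 2) > 0"
    using a b k by (auto simp: Beta_def)
  ultimately show ?thesis
    unfolding lambda Beta choose p_xi_def gamma_over_fact_def c_def[symmetric] f_def[symmetric]
    by (simp add: field_simps)
qed

lemma first_decrement_prob_eq:
  fixes a b :: real assumes a: "0 < a" "a < 2" and b: "b > 0" and k: "1 \<le> k" "k < n"
  shows "first_decrement_prob a b n k
    = p_xi a k * gamma_over_fact b (n-1-k) / (\<Sum>j=1..n-1. p_xi a j * gamma_over_fact b (n-1-j))"
proof -
  define Q where "Q = fact n * Gamma a / ((2 - a) * Gamma (real n + a + b - 2) * Beta a b)"
  have "Q > 0" unfolding Q_def Beta_def using a b k by (intro divide_pos_pos mult_pos_pos) auto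
  have "lambda_n a b n = (\<Sum>j=Suc 1..Suc (n-1). real (n choose j) * lambda_nk a b n j)"
    using k by (simp add: lambda_n_def numeral_2_eq_2)
  also have "\<dots> = (\<Sum>j=1..n-1. real (n choose Suc j) * lambda_nk a b n (Suc j))"
    by (rule sum.shift_bounds_cl_Suc_ivl)
  also have "\<dots> = Q * (\<Sum>j=1..n-1. p_xi a j * gamma_over_fact b (n-1-j))"
    unfolding sum_distrib_left Q_def using choose_mult_lambda_nk_eq[OF a b]
    by (intro sum.cong) auto
  finally have "first_decrement_prob a b n k
      = Q * (p_xi a k * gamma_over_fact b (n-1-k))
        / (Q * (\<Sum>j=1..n-1. p_xi a j * gamma_over_fact b (n-1-j)))"
    unfolding first_decrement_prob_def choose_mult_lambda_nk_eq[OF a b k] Q_def by simp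
  then show ?thesis using \<open>Q > 0\<close> by simp
qed

section \<open>Regularity of the weights\<close>

lemma gamma_over_fact_Suc:
  assumes "b > 0"
  shows "gamma_over_fact b (Suc m) = (real m + b) / (real m + 1) * gamma_over_fact b m"
  using Gamma_real_plus1[of "real m + b"] assms
  by (simp add: gamma_over_fact_def add_ac field_simps)

lemma gamma_over_fact_powr_bounds:
  fixes b :: real assumes b: "b > 0"
  obtains c K where "c > 0" "K > 0"
    "\<And>m. c * (real m + 1) powr (b - 1) \<le> gamma_over_fact b m"
    "\<And>m. gamma_over_fact b m \<le> K * (real m + 1) powr (b - 1)"
proof -
  obtain c K where cK: "c > 0" "K > 0"
    "\<And>n. n \<ge> 1 \<Longrightarrow> c * fact (n-1) * real n powr b \<le> Gamma (real n + b)"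
    "\<And>n. n \<ge> 1 \<Longrightarrow> Gamma (real n + b) \<le> K * fact (n-1) * real n powr b"
    using Gamma_nat_add_bounds[OF b] by metis
  have ratio: "1 / (1 + b) \<le> (real m + 1) / (real m + b)" "(real m + 1) / (real m + b) \<le> 1 + 1 / b"
    for m using b by (simp_all add: field_simps)
  have eq: "gamma_over_fact b m = Gamma (real (Suc m) + b) / (fact m * real (Suc m) powr b)
              * ((real m + 1) / (real m + b)) * (real m + 1) powr (b - 1)" for m
  proof -
    have "real (Suc m) powr b = (real m + 1) * (real m + 1) powr (b - 1)"
      by (simp add: powr_diff add_ac)
    moreover have "Gamma (real (Suc m) + b) = (real m + b) * Gamma (real m + b)"
      using Gamma_real_plus1[of "real m + b"] b by (simp add: add_ac)
    moreover have "(real m + 1) powr (b - 1) > 0" "real m + b > 0" using b by auto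
    ultimately show ?thesis by (simp add: gamma_over_fact_def divide_simps)
  qed
  show ?thesis
  proof (rule that[of "c / (1 + b)" "K * (1 + 1 / b)"])
    fix m :: nat
    have pos: "fact m * real (Suc m) powr b > 0" by simp
    have lo: "c \<le> Gamma (real (Suc m) + b) / (fact m * real (Suc m) powr b)"
      using cK(3)[of "Suc m"] pos by (simp add: le_divide_eq mult.assoc)
    have hi: "Gamma (real (Suc m) + b) / (fact m * real (Suc m) powr b) \<le> K"
      using cK(4)[of "Suc m"] pos by (simp add: divide_le_eq mult.assoc)
    have "c * (1 / (1 + b)) \<le> Gamma (real (Suc m) + b) / (fact m * real (Suc m) powr b)
        * ((real m + 1) / (real m + b))"
      using lo ratio(1)[of m] cK(1) b by (intro mult_mono) auto
    then show "c / (1 + b) * (real m + 1) powr (b - 1) \<le> gamma_over_fact b m"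
      unfolding eq by (intro mult_right_mono) auto
    show "gamma_over_fact b m \<le> K * (1 + 1 / b) * (real m + 1) powr (b - 1)"
      unfolding eq using hi ratio(2)[of m] cK b
      by (intro mult_right_mono mult_mono) auto
    show "c / (1 + b) > 0" "K * (1 + 1 / b) > 0"
      using cK b by (auto intro!: mult_pos_pos add_pos_pos)
  qed
qed

lemma gamma_over_fact_ratio_le:
  fixes b :: real assumes b: "b > 0"
  obtains K where "K > 0"
    "\<And>m m'. gamma_over_fact b m / gamma_over_fact b m'
       \<le> K * ((real m + 1) / (real m' + 1)) powr (b - 1)"
proof -
  obtain c K where cK: "c > 0" "K > 0"
    "\<And>m. c * (real m + 1) powr (b - 1) \<le> gamma_over_fact b m"
    "\<And>m. gamma_over_fact b m \<le> K * (real m + 1) powr (b - 1)"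
    using gamma_over_fact_powr_bounds[OF b] by metis
  show ?thesis
  proof (rule that[of "K / c"])
    fix m m' :: nat
    show "gamma_over_fact b m / gamma_over_fact b m'
        \<le> K / c * ((real m + 1) / (real m' + 1)) powr (b - 1)"
      using cK(3)[of m'] cK(4)[of m] cK(1,2) gamma_over_fact_pos[OF b]
      by (simp add: powr_divide divide_simps mult_mono)
  qed (use cK in simp)
qed

lemma abs_ln_gamma_over_fact_Suc_diff_le:
  fixes b :: real assumes b: "b > 0"
  shows "\<bar>ln (gamma_over_fact b (Suc m)) - ln (gamma_over_fact b m)\<bar>
           \<le> \<bar>b - 1\<bar> * (1 + 1 / b) / (real m + 1)"
proof -
  define x where "x = (real m + b) / (real m + 1)"
  have x: "x > 0" using b by (simp add: x_def)
  have "gamma_over_fact b (Suc m) = x * gamma_over_fact b m"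
    by (simp add: gamma_over_fact_Suc[OF b] x_def)
  then have "ln (gamma_over_fact b (Suc m)) - ln (gamma_over_fact b m) = ln x"
    using x gamma_over_fact_pos[OF b, of m] by (simp add: ln_mult)
  moreover have "\<bar>ln x\<bar> \<le> \<bar>b - 1\<bar> * (1 + 1 / b) / (real m + 1)"
  proof (cases "b \<ge> 1")
    case True
    then have "\<bar>ln x\<bar> \<le> x - 1" using ln_le_minus_one[OF x] by (simp add: x_def)
    also have "\<dots> = (b - 1) / (real m + 1)" by (simp add: x_def field_simps)
    also have "\<dots> \<le> \<bar>b - 1\<bar> * (1 + 1 / b) / (real m + 1)"
      using b True by (intro divide_right_mono) (auto simp: field_simps)
    finally show ?thesis .
  next
    case False
    then have "x \<le> 1" by (simp add: x_def)
    then have "\<bar>ln x\<bar> = ln (1 / x)" using x by (simp add: ln_div)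
    also have "\<dots> \<le> 1 / x - 1" using x by (intro ln_le_minus_one) auto
    also have "\<dots> = (1 - b) / (real m + b)" using b by (simp add: x_def field_simps)
    also have "\<dots> \<le> (1 - b) / (b * (real m + 1))"
      using b False mult_left_le_one_le[of "real m" b]
      by (intro divide_left_mono mult_pos_pos) (auto simp: algebra_simps)
    also have "\<dots> \<le> \<bar>b - 1\<bar> * (1 + 1 / b) / (real m + 1)"
      using b False
      by (simp add: field_simps mult_left_le_one_le power2_eq_square divide_right_mono)
    finally show ?thesis .
  qed
  ultimately show ?thesis by simp
qed

lemma abs_ln_gamma_over_fact_diff_le:
  fixes b :: real assumes b: "b > 0"
  shows "\<bar>ln (gamma_over_fact b (m + d)) - ln (gamma_over_fact b m)\<bar>
           \<le> \<bar>b - 1\<bar> * (1 + 1 / b) * real d / (real m + 1)"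
proof (induction d)
  case (Suc d)
  define L where "L = \<bar>b - 1\<bar> * (1 + 1 / b)"
  have L: "L \<ge> 0" using b by (simp add: L_def)
  have "\<bar>ln (gamma_over_fact b (m + Suc d)) - ln (gamma_over_fact b m)\<bar>
      \<le> \<bar>ln (gamma_over_fact b (Suc (m + d))) - ln (gamma_over_fact b (m + d))\<bar>
        + \<bar>ln (gamma_over_fact b (m + d)) - ln (gamma_over_fact b m)\<bar>"
    by simp
  also have "\<dots> \<le> L / (real (m + d) + 1) + L * real d / (real m + 1)"
    using abs_ln_gamma_over_fact_Suc_diff_le[OF b, of "m + d"] Suc
    by (intro add_mono) (auto simp: L_def)
  also have "L / (real (m + d) + 1) \<le> L / (real m + 1)"
    using L by (intro divide_left_mono) auto
  finally show ?case by (simp add: L_def add_divide_distrib algebra_simps)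
qed simp

lemma abs_diff_div_le_abs_ln_diff:
  fixes x y :: real assumes x: "x > 0" and y: "y > 0"
  shows "\<bar>x - y\<bar> / y \<le> \<bar>ln x - ln y\<bar> * exp \<bar>ln x - ln y\<bar>"
proof -
  define u where "u = ln x - ln y"
  have "(x - y) / y = exp u - 1"
    using x y by (simp add: u_def exp_diff diff_divide_distrib)
  have "\<bar>x - y\<bar> / y = \<bar>(x - y) / y\<bar>" using y by (simp add: abs_divide)
  also have "\<dots> = \<bar>exp u - 1\<bar>" using \<open>(x - y) / y = exp u - 1\<close> by simp
  also have "\<dots> \<le> \<bar>u\<bar> * exp \<bar>u\<bar>"
  proof (cases "u \<ge> 0")
    case True
    have "1 - u \<le> exp (- u)" using exp_ge_add_one_self[of "- u"] by simp
    then have "(1 - u) * exp u \<le> 1" by (simp add: exp_minus field_simps)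
    then show ?thesis using True by (simp add: algebra_simps)
  next
    case False
    then have "\<bar>exp u - 1\<bar> = 1 - exp u" by simp
    also have "\<dots> \<le> \<bar>u\<bar>" using exp_ge_add_one_self[of u] False by linarith
    also have "\<dots> \<le> \<bar>u\<bar> * exp \<bar>u\<bar>" using mult_left_mono[of 1 "exp \<bar>u\<bar>" "\<bar>u\<bar>"] by simp
    finally show ?thesis .
  qed
  finally show ?thesis by (simp add: u_def)
qed

definition weight_rel_dev :: "real \<Rightarrow> nat \<Rightarrow> nat \<Rightarrow> real" where
  "weight_rel_dev b n k =
     \<bar>gamma_over_fact b (n-1-k) - gamma_over_fact b (n-2)\<bar> / gamma_over_fact b (n-2)"

lemma weight_rel_dev_nonneg: "b > 0 \<Longrightarrow> weight_rel_dev b n k \<ge> 0"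
  using gamma_over_fact_pos[of b "n-2"] by (simp add: weight_rel_dev_def)

lemma weight_rel_dev_le_of_double_le:
  fixes b :: real assumes b: "b > 0" and k: "1 \<le> k" "2 * k \<le> n"
  defines "L \<equiv> \<bar>b - 1\<bar> * (1 + 1 / b)"
  shows "weight_rel_dev b n k \<le> 2 * L * exp L * (real k / real n)"
proof -
  have L: "L \<ge> 0" using b by (simp add: L_def)
  have kn: "2 * real k \<le> real n" "real k < real n" using k by linarith+
  define u where "u = ln (gamma_over_fact b (n-1-k)) - ln (gamma_over_fact b (n-2))"
  have "n - 2 = (n-1-k) + (k-1)" using k by simp
  then have "\<bar>u\<bar> \<le> L * real (k-1) / (real (n-1-k) + 1)"
    using abs_ln_gamma_over_fact_diff_le[OF b, of "n-1-k" "k-1"]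
    by (simp add: u_def L_def abs_minus_commute)
  also have "\<dots> \<le> L * (2 * real k / real n)"
  proof -
    have "real k * (2 * real k) \<le> real k * real n" using kn by (simp add: mult_left_mono)
    then have "(real k - 1) * real n \<le> 2 * real k * (real n - real k)"
      by (simp add: algebra_simps)
    then have "real (k-1) / (real (n-1-k) + 1) \<le> 2 * real k / real n"
      using k kn by (simp add: of_nat_diff field_simps)
    then show ?thesis using L by (simp add: mult_left_mono flip: times_divide_eq_right)
  qed
  finally have u: "\<bar>u\<bar> \<le> 2 * L * (real k / real n)" by (simp add: mult_ac)
  also have "\<dots> \<le> L" using kn L by (simp add: field_simps mult_left_mono)
  finally have u_le_L: "\<bar>u\<bar> \<le> L" .
  have "weight_rel_dev b n k \<le> \<bar>u\<bar> * exp \<bar>u\<bar>"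
    unfolding weight_rel_dev_def u_def by (intro abs_diff_div_le_abs_ln_diff gamma_over_fact_pos b)
  also have "\<dots> \<le> 2 * L * (real k / real n) * exp L"
    using u u_le_L by (intro mult_mono) auto
  finally show ?thesis by (simp add: mult_ac)
qed

lemma weight_rel_dev_le:
  fixes b :: real assumes b: "b > 0"
  obtains K where "K > 0"
    "\<And>n k. 1 \<le> k \<Longrightarrow> k < n \<Longrightarrow> weight_rel_dev b n k
       \<le> K * (real k / real n)
         + (if 2 * k \<le> n then 0 else K * (real (n-k) / real (n-1)) powr (b - 1))"
proof -
  define L where "L = \<bar>b - 1\<bar> * (1 + 1 / b)"
  have L: "L \<ge> 0" using b by (simp add: L_def)
  obtain K0 where K0: "K0 > 0"
    "\<And>m m'. gamma_over_fact b m / gamma_over_fact b m'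
       \<le> K0 * ((real m + 1) / (real m' + 1)) powr (b - 1)"
    using gamma_over_fact_ratio_le[OF b] by metis
  define K where "K = 2 * L * exp L + 2 + K0"
  show ?thesis
  proof (rule that[of K])
    show "K > 0" using L K0 by (simp add: K_def add_nonneg_pos)
    fix n k :: nat assume k: "1 \<le> k" "k < n"
    show "weight_rel_dev b n k \<le> K * (real k / real n)
        + (if 2 * k \<le> n then 0 else K * (real (n-k) / real (n-1)) powr (b - 1))"
    proof (cases "2 * k \<le> n")
      case True
      then have "weight_rel_dev b n k \<le> 2 * L * exp L * (real k / real n)"
        using weight_rel_dev_le_of_double_le[OF b k(1)] by (simp add: L_def)
      also have "\<dots> \<le> K * (real k / real n)"
        using K0 by (intro mult_right_mono) (auto simp: K_def)
      finally show ?thesis using True by simp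
    next
      case False
      define r where "r = gamma_over_fact b"
      have r_pos: "r m > 0" for m by (simp add: r_def gamma_over_fact_pos b)
      have "real (n-1-k) + 1 = real (n-k)" "real (n-2) + 1 = real (n-1)" using k by auto
      then have ratio: "r (n-1-k) / r (n-2) \<le> K0 * (real (n-k) / real (n-1)) powr (b - 1)"
        using K0(2)[of "n-1-k" "n-2"] by (simp add: r_def)
      have "weight_rel_dev b n k \<le> 1 + r (n-1-k) / r (n-2)"
        using r_pos[of "n-1-k"] r_pos[of "n-2"]
        by (simp add: weight_rel_dev_def r_def[symmetric] divide_simps)
      also have "\<dots> \<le> 2 * (real k / real n) + K0 * (real (n-k) / real (n-1)) powr (b - 1)"
        using False k ratio by (intro add_mono) (simp_all add: le_divide_eq)
      also have "\<dots> \<le> K * (real k / real n) + K * (real (n-k) / real (n-1)) powr (b - 1)"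
        using L K0 by (intro add_mono mult_right_mono) (auto simp: K_def)
      finally show ?thesis using False by simp
    qed
  qed
qed

lemma p_xi_mult_weight_rel_dev_le:
  fixes a b t :: real
  assumes a: "0 < a" "a \<le> 1" and b: "b > 0" and t: "a + t \<le> 3"
  obtains C where "C > 0"
    "\<And>n k. 1 \<le> k \<Longrightarrow> k < n \<Longrightarrow> real k powr t * p_xi a k * weight_rel_dev b n k
       \<le> C * (real k powr (a + t - 2) / real n
              + (real n / 2) powr (a + t - 3) * (real (n-k) / real (n-1)) powr (b - 1))"
proof -
  obtain Cp where Cp: "Cp > 0" "\<And>k. k \<ge> 1 \<Longrightarrow> p_xi a k \<le> Cp * real k powr (a - 3)"
    using p_xi_le_powr[OF a] by metis
  obtain K where K: "K > 0"
    "\<And>n k. 1 \<le> k \<Longrightarrow> k < n \<Longrightarrow> weight_rel_dev b n k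
       \<le> K * (real k / real n)
         + (if 2 * k \<le> n then 0 else K * (real (n-k) / real (n-1)) powr (b - 1))"
    using weight_rel_dev_le[OF b] by metis
  show ?thesis
  proof (rule that[of "Cp * K"])
    fix n k :: nat assume k: "1 \<le> k" "k < n"
    define x where "x = (real (n-k) / real (n-1)) powr (b - 1)"
    have "real k powr t * p_xi a k \<le> real k powr t * (Cp * real k powr (a - 3))"
      using Cp(2) k by (intro mult_left_mono) auto
    also have "\<dots> = Cp * real k powr (a + t - 3)"
      by (simp add: powr_add[symmetric] algebra_simps)
    finally have "real k powr t * p_xi a k * weight_rel_dev b n k
        \<le> Cp * real k powr (a + t - 3) * (K * (real k / real n) + (if 2 * k \<le> n then 0 else K * x))"
      by (rule mult_mono) (use K(2)[OF k] Cp(1) weight_rel_dev_nonneg[OF b] in \<open>auto simp: x_def\<close>)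
    also have "\<dots> = Cp * K * (real k powr (a + t - 3) * real k / real n
        + (if 2 * k \<le> n then 0 else real k powr (a + t - 3) * x))"
      by (simp add: algebra_simps)
    also have "real k powr (a + t - 3) * real k = real k powr (a + t - 2)"
      using k powr_add[of "real k" "a + t - 3" 1] by simp
    finally have "real k powr t * p_xi a k * weight_rel_dev b n k
        \<le> Cp * K * (real k powr (a + t - 2) / real n
          + (if 2 * k \<le> n then 0 else real k powr (a + t - 3) * x))" .
    moreover have "(if 2 * k \<le> n then 0 else real k powr (a + t - 3) * x)
        \<le> (real n / 2) powr (a + t - 3) * x"
      using t k by (auto simp: x_def intro!: mult_right_mono powr_mono2')
    ultimately show "real k powr t * p_xi a k * weight_rel_dev b n k
        \<le> Cp * K * (real k powr (a + t - 2) / real n + (real n / 2) powr (a + t - 3) * x)"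
      by (rule order_trans[OF _ mult_left_mono[OF add_left_mono]]) (use Cp K in auto)
  qed (use Cp K in simp)
qed

lemma sum_p_xi_weight_rel_dev_le:
  fixes a b s t :: real
  assumes a: "0 < a" "a \<le> 1" and b: "b > 0"
    and t: "a + t \<le> 3" and s: "s > -1" "a + t - 2 \<le> s"
  obtains C where "C > 0"
    "\<And>n. n \<ge> 2 \<Longrightarrow>
       (\<Sum>k=1..n-1. real k powr t * p_xi a k * weight_rel_dev b n k) \<le> C * real n powr s"
proof -
  obtain C0 where C0: "C0 > 0"
    "\<And>n k. 1 \<le> k \<Longrightarrow> k < n \<Longrightarrow> real k powr t * p_xi a k * weight_rel_dev b n k
       \<le> C0 * (real k powr (a + t - 2) / real n
              + (real n / 2) powr (a + t - 3) * (real (n-k) / real (n-1)) powr (b - 1))"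
    using p_xi_mult_weight_rel_dev_le[OF a b t] by metis
  obtain Cs where Cs: "Cs > 0" "\<And>N. (\<Sum>k=1..N. real k powr s) \<le> Cs * real N powr (s + 1)"
    using sum_powr_le[OF s(1)] by metis
  obtain Cb where Cb: "Cb > 0"
    "\<And>n. (\<Sum>k=1..n-1. (real (n-k) / real (n-1)) powr (b - 1)) \<le> Cb * real n"
    using sum_ratio_powr_le[of "b - 1"] b by auto
  show ?thesis
  proof (rule that[of "C0 * (Cs + 2 powr (3 - (a + t)) * Cb)"])
    fix n :: nat assume n: "n \<ge> 2"
    then have N: "real n \<ge> 1" by simp
    have "(\<Sum>k=1..n-1. real k powr (a + t - 2)) \<le> (\<Sum>k=1..n-1. real k powr s)"
      using s(2) by (intro sum_mono powr_mono) auto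
    also have "\<dots> \<le> (\<Sum>k=1..n. real k powr s)" by (intro sum_mono2) auto
    finally have sum_le: "(\<Sum>k=1..n-1. real k powr (a + t - 2)) \<le> Cs * real n powr (s + 1)"
      using Cs(2)[of n] by linarith
    have "(\<Sum>k=1..n-1. real k powr t * p_xi a k * weight_rel_dev b n k)
        \<le> (\<Sum>k=1..n-1. C0 * (real k powr (a + t - 2) / real n
              + (real n / 2) powr (a + t - 3) * (real (n-k) / real (n-1)) powr (b - 1)))"
      using C0(2) by (intro sum_mono) auto
    also have "\<dots> = C0 * ((\<Sum>k=1..n-1. real k powr (a + t - 2)) / real n
        + (real n / 2) powr (a + t - 3) * (\<Sum>k=1..n-1. (real (n-k) / real (n-1)) powr (b - 1)))"
      by (simp add: sum_divide_distrib sum_distrib_left flip: sum.distrib)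
    also have "\<dots> \<le> C0 * (Cs * real n powr (s + 1) / real n + (real n / 2) powr (a + t - 3) * (Cb * real n))"
      using sum_le Cb(2)[of n] C0(1) by (intro mult_left_mono add_mono divide_right_mono) auto
    also have "\<dots> = C0 * (Cs * (real n powr (s + 1) / real n)
        + Cb * ((real n / 2) powr (a + t - 3) * real n))"
      by (simp add: field_simps)
    also have "real n powr (s + 1) / real n = real n powr s"
      using N by (simp add: powr_add)
    also have "(real n / 2) powr (a + t - 3) * real n = 2 powr (3 - (a + t)) * real n powr (a + t - 2)"
      using half_powr_mult[of "real n" "a + t - 3"] N by simp
    also have "real n powr (a + t - 2) \<le> real n powr s"
      using N s(2) by (rule powr_mono[rotated])
    finally show "(\<Sum>k=1..n-1. real k powr t * p_xi a k * weight_rel_dev b n k)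
        \<le> C0 * (Cs + 2 powr (3 - (a + t)) * Cb) * real n powr s"
      using C0 Cb by (simp add: algebra_simps)
  qed (use C0 Cs Cb in \<open>auto intro!: mult_pos_pos add_pos_pos\<close>)
qed

lemma p_xi_total_deviation_le:
  fixes a b s :: real
  assumes a: "0 < a" "a \<le> 1" and b: "b > 0" and s: "s > -1" "a - 2 \<le> s"
  obtains C where "C > 0"
    "\<And>n. n \<ge> 2 \<Longrightarrow> \<bar>1 - (\<Sum>k=1..n-1. p_xi a k)\<bar>
       + (\<Sum>k=1..n-1. p_xi a k * weight_rel_dev b n k) \<le> C * real n powr s"
proof -
  obtain Ct where Ct: "Ct > 0"
    "\<And>n. n \<ge> 1 \<Longrightarrow> \<bar>1 - (\<Sum>k=1..n-1. p_xi a k)\<bar> \<le> Ct * real n powr (a - 2)"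
    using p_xi_tail_le[OF a] by metis
  obtain CD where CD: "CD > 0" "\<And>n. n \<ge> 2 \<Longrightarrow>
      (\<Sum>k=1..n-1. real k powr 0 * p_xi a k * weight_rel_dev b n k) \<le> CD * real n powr s"
    using sum_p_xi_weight_rel_dev_le[OF a b, of 0 s] a s by auto
  show ?thesis
  proof (rule that[of "Ct + CD"])
    fix n :: nat assume n: "n \<ge> 2"
    have "Ct * real n powr (a - 2) \<le> Ct * real n powr s"
      using n s Ct(1) by (intro mult_left_mono powr_mono) auto
    then have "\<bar>1 - (\<Sum>k=1..n-1. p_xi a k)\<bar> \<le> Ct * real n powr s"
      using Ct(2)[of n] n by linarith
    moreover have "(\<Sum>k=1..n-1. p_xi a k * weight_rel_dev b n k)
        = (\<Sum>k=1..n-1. real k powr 0 * p_xi a k * weight_rel_dev b n k)"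
      by (intro sum.cong) auto
    ultimately show "\<bar>1 - (\<Sum>k=1..n-1. p_xi a k)\<bar>
        + (\<Sum>k=1..n-1. p_xi a k * weight_rel_dev b n k) \<le> (Ct + CD) * real n powr s"
      using CD(2)[OF n] by (simp add: distrib_right)
  qed (use Ct CD in simp)
qed

lemma first_decrement_weighted_deviation_le:
  fixes a b q :: real
  assumes a: "0 < a" "a \<le> 1" and b: "b > 0" and q: "q \<le> 1" "q + a > 1"
  obtains C where "\<And>n. n \<ge> 2 \<Longrightarrow>
    (\<Sum>k=1..n-1. real k powr q * \<bar>first_decrement_prob a b n k - p_xi a k\<bar>)
      \<le> C * real n powr (a + q - 2)"
proof -
  txt \<open>The normalising error is O(n^(\<delta>-1)); it multiplies the truncated q-th moment of
    \<xi>, which is only O(n^\<delta>) (it grows logarithmically when a + q = 2).\<close>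
  define \<delta> where "\<delta> = (a + q - 1) / 2"
  have \<delta>: "\<delta> - 1 > -1" "a - 2 \<le> \<delta> - 1" "\<delta> > 0" "a + q - 2 \<le> \<delta>" "a + q - 2 = (\<delta> - 1) + \<delta>"
    using a q by (auto simp: \<delta>_def field_simps)
  have aq: "a + q \<le> 3" "a + q - 2 > -1" using a q by auto
  obtain CA where CA: "CA > 0" "\<And>n. n \<ge> 2 \<Longrightarrow>
      (\<Sum>k=1..n-1. real k powr q * p_xi a k * weight_rel_dev b n k) \<le> CA * real n powr (a + q - 2)"
    using sum_p_xi_weight_rel_dev_le[OF a b aq order.refl] by blast
  obtain CE where CE: "CE > 0" "\<And>n. n \<ge> 2 \<Longrightarrow> \<bar>1 - (\<Sum>k=1..n-1. p_xi a k)\<bar>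
      + (\<Sum>k=1..n-1. p_xi a k * weight_rel_dev b n k) \<le> CE * real n powr (\<delta> - 1)"
    using p_xi_total_deviation_le[OF a b \<delta>(1,2)] by blast
  obtain CW where CW: "CW > 0" "\<And>n. (\<Sum>k=1..n-1. real k powr q * p_xi a k) \<le> CW * real n powr \<delta>"
    using sum_powr_mult_p_xi_le[OF a \<delta>(3,4)] by blast
  show ?thesis
  proof (rule that)
    fix n :: nat assume n: "n \<ge> 2"
    define \<rho> where "\<rho> k = gamma_over_fact b (n-1-k)" for k
    have dev: "\<bar>\<rho> k - \<rho> 1\<bar> / \<rho> 1 = weight_rel_dev b n k" for k
      by (simp add: \<rho>_def weight_rel_dev_def numeral_2_eq_2)
    have "(\<Sum>k=1..n-1. real k powr q * \<bar>first_decrement_prob a b n k - p_xi a k\<bar>)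
        = (\<Sum>k=1..n-1. real k powr q * \<bar>p_xi a k * \<rho> k / (\<Sum>j=1..n-1. p_xi a j * \<rho> j) - p_xi a k\<bar>)"
      using a b by (intro sum.cong) (auto simp: first_decrement_prob_eq \<rho>_def)
    also have "\<dots> \<le> ((\<Sum>k=1..n-1. real k powr q * p_xi a k * weight_rel_dev b n k)
        + (\<bar>1 - (\<Sum>k=1..n-1. p_xi a k)\<bar> + (\<Sum>k=1..n-1. p_xi a k * weight_rel_dev b n k))
          * (\<Sum>k=1..n-1. real k powr q * p_xi a k)) / p_xi a 1"
      unfolding dev[symmetric] using n a p_xi_pos[of a] gamma_over_fact_pos[OF b]
      by (intro sum_abs_normalized_minus_le) (auto simp: \<rho>_def less_imp_le)
    also have "\<dots> \<le> (CA * real n powr (a + q - 2)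
        + CE * real n powr (\<delta> - 1) * (CW * real n powr \<delta>)) / p_xi a 1"
    proof (intro divide_right_mono add_mono mult_mono)
      show "0 \<le> (\<Sum>k=1..n-1. real k powr q * p_xi a k)"
        using a p_xi_pos[of a] by (intro sum_nonneg) (auto simp: less_imp_le)
    qed (use CA(2)[OF n] CE(1) CE(2)[OF n] CW(2)[of n] a p_xi_pos[of a 1] in auto)
    also have "\<dots> = (CA + CE * CW) / p_xi a 1 * real n powr (a + q - 2)"
    proof -
      have "real n powr (\<delta> - 1) * real n powr \<delta> = real n powr (a + q - 2)"
        unfolding \<delta>(5) by (rule powr_add[symmetric])
      then show ?thesis by (simp add: algebra_simps add_divide_distrib)
    qed
    finally show "(\<Sum>k=1..n-1. real k powr q * \<bar>first_decrement_prob a b n k - p_xi a k\<bar>)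
        \<le> (CA + CE * CW) / p_xi a 1 * real n powr (a + q - 2)" .
  qed
qed

theorem lemma6p3:
  fixes a b q :: real
  assumes "0 < a" "a \<le> 1" "0 < b" "0 < q" "q \<le> 1" "q + a > 1"
  shows "(\<lambda>n::nat. \<Sum>k=1..n-1. real k powr q * \<bar>first_decrement_prob a b n k - p_xi a k\<bar>)
           \<in> O(\<lambda>n. real n powr (a + q - 2))"
proof -
  obtain C where C: "\<And>n. n \<ge> 2 \<Longrightarrow>
      (\<Sum>k=1..n-1. real k powr q * \<bar>first_decrement_prob a b n k - p_xi a k\<bar>)
        \<le> C * real n powr (a + q - 2)"
    using first_decrement_weighted_deviation_le[of a b q] assms by blast
  show ?thesis
  proof (rule bigoI)
    show "\<forall>\<^sub>F n in at_top. norm (\<Sum>k=1..n-1. real k powr q * \<bar>first_decrement_prob a b n k - p_xi a k\<bar>)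
            \<le> C * norm (real n powr (a + q - 2))"
      using eventually_ge_at_top[of "2::nat"]
    proof eventually_elim
      case (elim n)
      have "0 \<le> (\<Sum>k=1..n-1. real k powr q * \<bar>first_decrement_prob a b n k - p_xi a k\<bar>)"
        by (intro sum_nonneg) auto
      then show ?case using C[OF elim] by simp
    qed
  qed
qed

end
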